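(* Let $d\ge1$, let $G$ be a graph with a nonedge $f=uv$, let $C$ be a clique separator of $G\cup f$, and let $G_1,\dots,G_k$ be the $C$-components of $G\cup f$ that contain both $u$ and $v$. Then $(G,f)$ has the $d$-SIP if and only if $(G_i\setminus f,f)$ has the $d$-SIP for every $i$.
   Context: A linkage $(G,\ell)$: finite simple graph $G$ and $\ell:E(G)\to\mathbb{R}_{\ge0}$ (squared lengths). A $d$-realization is $p:V(G)\to\mathbb{R}^d$ with $\|p(a)-p(b)\|^2=\ell(ab)$ for all $ab\in E(G)$; $\mathcal{C}^d(G,\ell)$ is the set of these. For a nonedge $f=uv$, $\Omega^d_f(G,\ell)=\{\|p(u)-p(v)\|^2:p\in\mathcal{C}^d(G,\ell)\}$; $(G,f)$ has the $d$-SIP if $\Omega^d_f(G,\ell)$ is convex (empty or a closed interval) for every $\ell$. $G\cup f$ adds $f$ as an edge; $H\setminus f$ deletes the edge $f$. A clique is a set of pairwise adjacent vertices; a clique separator of $H$ is a clique $C$ such that $H-C$ has at least two connected components. The $C$-components of $H$ are the subgraphs induced by $V(K)\cup C$ for the connected components $K$ of $H-C$. *)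

theory Defs
  imports "HOL-Analysis.Analysis"
begin

definition simple_graph :: "'a set \<Rightarrow> 'a set set \<Rightarrow> bool" where
  "simple_graph V E \<longleftrightarrow> finite V \<and> (\<forall>e\<in>E. \<exists>a b. a \<noteq> b \<and> a \<in> V \<and> b \<in> V \<and> e = {a, b})"

text \<open>d-realizations of a linkage (G, l) with l the squared edge lengths; the
  dimension d is the cardinality of the finite index type 'n.\<close>
definition realization :: "'a set set \<Rightarrow> ('a set \<Rightarrow> real) \<Rightarrow> ('a \<Rightarrow> real ^ 'n::finite) \<Rightarrow> bool" where
  "realization E l p \<longleftrightarrow> (\<forall>a b. {a, b} \<in> E \<longrightarrow> (norm (p a - p b))\<^sup>2 = l {a, b})"

definition Omega :: "'n::finite itself \<Rightarrow> 'a set set \<Rightarrow> ('a set \<Rightarrow> real) \<Rightarrow> 'a \<Rightarrow> 'a \<Rightarrow> real set" where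
  "Omega _ E l u v = {(norm (p u - p v))\<^sup>2 | p :: 'a \<Rightarrow> real ^ 'n. realization E l p}"

definition has_SIP :: "'n::finite itself \<Rightarrow> 'a set set \<Rightarrow> 'a \<Rightarrow> 'a \<Rightarrow> bool" where
  "has_SIP T E u v \<longleftrightarrow> (\<forall>l. (\<forall>e\<in>E. 0 \<le> l e) \<longrightarrow> convex (Omega T E l u v))"

definition clique :: "'a set set \<Rightarrow> 'a set \<Rightarrow> bool" where
  "clique E C \<longleftrightarrow> (\<forall>a\<in>C. \<forall>b\<in>C. a \<noteq> b \<longrightarrow> {a, b} \<in> E)"

definition components_minus :: "'a set \<Rightarrow> 'a set set \<Rightarrow> 'a set \<Rightarrow> 'a set set" where
  "components_minus V E C =
     {K. \<exists>x\<in>V - C. K = {y \<in> V - C.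
        (\<lambda>a b. a \<in> V - C \<and> b \<in> V - C \<and> {a, b} \<in> E)\<^sup>*\<^sup>* x y}}"

definition clique_separator :: "'a set \<Rightarrow> 'a set set \<Rightarrow> 'a set \<Rightarrow> bool" where
  "clique_separator V E C \<longleftrightarrow> C \<subseteq> V \<and> clique E C \<and> 2 \<le> card (components_minus V E C)"

definition induced_edges :: "'a set set \<Rightarrow> 'a set \<Rightarrow> 'a set set" where
  "induced_edges E W = {e \<in> E. e \<subseteq> W}"

end

theory Submission
  imports Defs
begin

text \<open>Euclidean realizations can be glued along a clique: the positions of a clique are fixed up to
  congruence by its edge lengths, and a congruence between finite point sets extends to an isometry
  of the whole space. For the backward direction, two realizations of G with squared u-v distances
  t1 \<le> t \<le> t3 restrict to every piece K \<union> C containing u and v; the SIP of the piece gives a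
  realization of it at distance t, and these are glued (the other pieces keep the first realization).
  All pieces agree on C because uv is the only clique edge without prescribed length, and if it lies
  in C it lies in every piece. For the forward direction, two realizations of a piece are extended
  to G by sending all remaining vertices to one point, placed at matching distances from C in both,
  so that the SIP of G applies to the extensions.\<close>

lemma exists_reflection_swapping:
  fixes x y :: "'v::real_inner"
  assumes "x \<noteq> y"
  obtains R where "\<And>a b. dist (R a) (R b) = dist a b" and "R x = y"
    and "\<And>a. dist a x = dist a y \<Longrightarrow> R a = a"
proof -
  define w where "w = y - x"
  have w0: "inner w w \<noteq> 0" using assms by (simp add: w_def)
  \<comment> \<open>the reflection in the perpendicular bisector of x and y\<close>
  define R where "R a = a - ((inner (a - x) w + inner (a - y) w) / inner w w) *\<^sub>R w" for a
  have diff: "R a - R b = (a - b) - (2 * inner (a - b) w / inner w w) *\<^sub>R w" for a b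
  proof -
    have "(inner (a - x) w + inner (a - y) w) / inner w w - (inner (b - x) w + inner (b - y) w) / inner w w
        = 2 * inner (a - b) w / inner w w"
      by (simp add: inner_diff_left diff_divide_distrib[symmetric] add_divide_distrib[symmetric])
    then show ?thesis unfolding R_def by (simp add: algebra_simps scaleR_diff_left[symmetric])
  qed
  have "dist (R a) (R b) = dist a b" for a b
  proof -
    have "(norm (R a - R b))\<^sup>2 = (norm (a - b))\<^sup>2"
      unfolding diff power2_norm_eq_inner
      using w0 by (simp add: algebra_simps power2_eq_square field_simps inner_commute)
    then show ?thesis by (simp add: dist_norm)
  qed
  moreover have "R x = y"
  proof -
    have "inner (x - y) w = - inner w w" by (simp add: w_def inner_diff_left inner_diff_right inner_commute)
    then show ?thesis using w0 unfolding R_def by (simp add: w_def)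
  qed
  moreover have "R a = a" if "dist a x = dist a y" for a
  proof -
    have "inner (a - x) (a - x) = inner (a - y) (a - y)"
      using that by (simp add: dist_norm flip: power2_norm_eq_inner)
    then have "inner (a - x) w + inner (a - y) w = 0"
      by (simp add: w_def inner_commute algebra_simps)
    then show ?thesis unfolding R_def by simp
  qed
  ultimately show ?thesis using that by blast
qed

text \<open>Compose reflections, each fixing the points already placed.\<close>
lemma congruence_extends_to_isometry:
  fixes a b :: "'c \<Rightarrow> 'v::real_inner"
  assumes "finite S" and "\<forall>x\<in>S. \<forall>y\<in>S. dist (a x) (a y) = dist (b x) (b y)"
  shows "\<exists>T. (\<forall>y z. dist (T y) (T z) = dist y z) \<and> (\<forall>x\<in>S. T (a x) = b x)"
  using assms
proof (induction S rule: finite_induct)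
  case empty
  show ?case by (rule exI[of _ id]) simp
next
  case (insert c S)
  then obtain T where T: "\<forall>y z. dist (T y) (T z) = dist y z" "\<forall>x\<in>S. T (a x) = b x" by auto
  show ?case
  proof (cases "T (a c) = b c")
    case True
    then show ?thesis using T by (intro exI[of _ T]) auto
  next
    case False
    then obtain R where R: "\<And>y z. dist (R y) (R z) = dist y z" "R (T (a c)) = b c"
      "\<And>y. dist y (T (a c)) = dist y (b c) \<Longrightarrow> R y = y"
      by (rule exists_reflection_swapping) blast+
    have "R (b x) = b x" if "x \<in> S" for x
      using T that insert.prems by (intro R(3)) (metis insertCI)
    then show ?thesis using T R by (intro exI[of _ "R \<circ> T"]) auto
  qed
qed

lemma exists_point_on_line_at_distance:
  fixes x y :: "'v::euclidean_space"
  assumes "0 \<le> a"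
  obtains X where "dist X x = a" and "dist X y = \<bar>a - dist x y\<bar>"
proof (cases "y = x")
  case True
  define e :: 'v where "e = (SOME i. i \<in> Basis)"
  have "norm e = 1" by (simp add: e_def SOME_Basis)
  then show ?thesis using True assms by (intro that[of "x + a *\<^sub>R e"]) (simp_all add: dist_norm)
next
  case False
  define d where "d = dist x y"
  have d: "d > 0" using False by (simp add: d_def)
  define X where "X = x + (a / d) *\<^sub>R (y - x)"
  have "X - y = (a / d - 1) *\<^sub>R (y - x)" by (simp add: X_def algebra_simps)
  then have "dist X y = \<bar>a / d - 1\<bar> * d" by (simp add: dist_norm d_def norm_minus_commute)
  also have "\<dots> = \<bar>a - d\<bar>"
  proof -
    have "\<bar>a / d - 1\<bar> * d = \<bar>(a / d - 1) * d\<bar>" using d by (simp add: abs_mult)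
    then show ?thesis using d by (simp add: left_diff_distrib)
  qed
  finally show ?thesis using d assms by (intro that[of X]) (simp_all add: X_def d_def dist_norm norm_minus_commute)
qed

text \<open>Put each point on its line at distance the average of the two lengths from the first
  endpoint; it is then half the length difference away from the second endpoint in both cases.\<close>
lemma exists_points_matching_two_distances:
  fixes x y x' y' :: "'v::euclidean_space"
  obtains X X' where "dist X x = dist X' x'" and "dist X y = dist X' y'"
proof -
  define a where "a = (dist x y + dist x' y') / 2"
  have "0 \<le> a" by (simp add: a_def)
  then obtain X X' where "dist X x = a" "dist X y = \<bar>a - dist x y\<bar>"
    and "dist X' x' = a" "dist X' y' = \<bar>a - dist x' y'\<bar>"
    by (metis exists_point_on_line_at_distance)
  moreover have "\<bar>a - dist x y\<bar> = \<bar>a - dist x' y'\<bar>" by (simp add: a_def field_simps)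
  ultimately show ?thesis by (intro that[of X X']) simp_all
qed

lemma exists_points_matching_distances_to_set:
  fixes p p' :: "'a \<Rightarrow> 'v::euclidean_space"
  assumes "\<And>c c'. c \<in> C \<Longrightarrow> c' \<in> C \<Longrightarrow> {c, c'} \<noteq> {u, v} \<Longrightarrow> dist (p c) (p c') = dist (p' c) (p' c')"
  obtains X X' where "\<And>c. c \<in> C \<Longrightarrow> dist X (p c) = dist X' (p' c)"
proof (cases "C \<subseteq> {u, v}")
  case True
  obtain X X' where "dist X (p u) = dist X' (p' u)" "dist X (p v) = dist X' (p' v)"
    by (rule exists_points_matching_two_distances)
  then show ?thesis using True by (intro that) auto
next
  case False
  then obtain w where "w \<in> C" "w \<notin> {u, v}" by blast
  then show ?thesis using assms by (intro that[of "p w" "p' w"]) (auto simp: doubleton_eq_iff)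
qed

lemma components_minus_edge_closed:
  assumes "K \<in> components_minus V H C" "b \<in> K" "{b, a} \<in> H" "a \<in> V"
  shows "a \<in> K \<union> C"
proof (cases "a \<in> C")
  case False
  let ?R = "\<lambda>a b. a \<in> V - C \<and> b \<in> V - C \<and> {a, b} \<in> H"
  from assms(1) obtain x where K: "K = {y \<in> V - C. ?R\<^sup>*\<^sup>* x y}"
    unfolding components_minus_def by blast
  with assms(2) have xb: "?R\<^sup>*\<^sup>* x b" "b \<in> V - C" by blast+
  have "?R b a" using xb(2) assms(3,4) False by blast
  with xb(1) have "?R\<^sup>*\<^sup>* x a" by (rule rtranclp.rtrancl_into_rtrancl)
  then show ?thesis using K False assms(4) by blast
qed simp

lemma components_minus_cover:
  assumes "x \<in> V - C" obtains K where "K \<in> components_minus V H C" "x \<in> K"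
proof
  let ?R = "\<lambda>a b. a \<in> V - C \<and> b \<in> V - C \<and> {a, b} \<in> H"
  show "{y \<in> V - C. ?R\<^sup>*\<^sup>* x y} \<in> components_minus V H C" unfolding components_minus_def
    by (rule CollectI, rule bexI[of _ x], rule refl, rule assms)
  show "x \<in> {y \<in> V - C. ?R\<^sup>*\<^sup>* x y}"
    by (rule CollectI, rule conjI, rule assms, rule rtranclp.rtrancl_refl)
qed

lemma components_minus_unique:
  assumes "K \<in> components_minus V H C" "K' \<in> components_minus V H C" "y \<in> K" "y \<in> K'"
  shows "K = K'"
proof -
  let ?R = "\<lambda>a b. a \<in> V - C \<and> b \<in> V - C \<and> {a, b} \<in> H"
  have "symp ?R" unfolding symp_def by (simp add: insert_commute)
  then have sym: "?R\<^sup>*\<^sup>* a b \<Longrightarrow> ?R\<^sup>*\<^sup>* b a" for a b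
    by (rule sympD[OF symp_rtranclp])
  have "K = {z \<in> V - C. ?R\<^sup>*\<^sup>* y z}" if "K \<in> components_minus V H C" "y \<in> K" for K
  proof -
    from that(1) obtain x where K: "K = {y \<in> V - C. ?R\<^sup>*\<^sup>* x y}"
      unfolding components_minus_def by blast
    with that(2) have xy: "?R\<^sup>*\<^sup>* x y" by blast
    show ?thesis
    proof (intro set_eqI iffI)
      fix z assume "z \<in> K"
      then have "?R\<^sup>*\<^sup>* x z" "z \<in> V - C" unfolding K by blast+
      then show "z \<in> {z \<in> V - C. ?R\<^sup>*\<^sup>* y z}" using sym[OF xy] rtranclp_trans[of ?R y x z] by blast
    next
      fix z assume "z \<in> {z \<in> V - C. ?R\<^sup>*\<^sup>* y z}"
      then have "?R\<^sup>*\<^sup>* y z" "z \<in> V - C" by blast+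
      then show "z \<in> K" unfolding K using xy rtranclp_trans[of ?R x y z] by blast
    qed
  qed
  from this[OF assms(1,3)] this[OF assms(2,4)] show ?thesis by simp
qed

lemma components_minus_pieces_overlap:
  assumes "K \<in> components_minus V H C" "K' \<in> components_minus V H C" "K \<noteq> K'"
  shows "(K \<union> C) \<inter> (K' \<union> C) \<subseteq> C"
proof
  fix x assume "x \<in> (K \<union> C) \<inter> (K' \<union> C)"
  then show "x \<in> C" using components_minus_unique[OF assms(1,2)] assms(3) by blast
qed

lemma components_minus_edge_in_piece:
  assumes "components_minus V H C \<noteq> {}" "{a, b} \<in> H" "a \<in> V" "b \<in> V"
  obtains K where "K \<in> components_minus V H C" "a \<in> K \<union> C" "b \<in> K \<union> C"
proof (cases "a \<in> C")
  case a: True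
  show ?thesis
  proof (cases "b \<in> C")
    case True
    obtain K where "K \<in> components_minus V H C" using assms(1) by blast
    with a True show ?thesis by (intro that[of K]) simp_all
  next
    case False
    have "b \<in> V - C" using assms(4) False by simp
    then obtain K where "K \<in> components_minus V H C" "b \<in> K" by (rule components_minus_cover)
    with a show ?thesis by (intro that[of K]) simp_all
  qed
next
  case False
  have "a \<in> V - C" using assms(3) False by simp
  then obtain K where K: "K \<in> components_minus V H C" "a \<in> K" by (rule components_minus_cover)
  moreover have "b \<in> K \<union> C" using components_minus_edge_closed[OF K] assms(2,4) .
  ultimately show ?thesis by (intro that[of K]) simp_all
qed

text \<open>Move every configuration onto a fixed one by an isometry that agrees on C; since the pieces
  overlap only in C, the moved configurations combine into a single map.\<close>
lemma glue_along_congruent_part: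
  fixes r :: "'i \<Rightarrow> 'a \<Rightarrow> 'v::real_inner"
  assumes "finite C"
    and piece_C: "\<And>i. i \<in> I \<Longrightarrow> C \<subseteq> P i"
    and piece_overlap: "\<And>i j. i \<in> I \<Longrightarrow> j \<in> I \<Longrightarrow> i \<noteq> j \<Longrightarrow> P i \<inter> P j \<subseteq> C"
    and congruent: "\<And>i j c c'. i \<in> I \<Longrightarrow> j \<in> I \<Longrightarrow> c \<in> C \<Longrightarrow> c' \<in> C \<Longrightarrow>
      dist (r i c) (r i c') = dist (r j c) (r j c')"
  shows "\<exists>q :: 'a \<Rightarrow> 'v. \<forall>i\<in>I. \<forall>x\<in>P i. \<forall>y\<in>P i. dist (q x) (q y) = dist (r i x) (r i y)"
proof (cases "I = {}")
  case False
  then obtain i0 where i0: "i0 \<in> I" by blast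
  have "\<exists>T. (\<forall>y z. dist (T y) (T z) = dist y z) \<and> (\<forall>c\<in>C. T (r i c) = r i0 c)" if "i \<in> I" for i
    using congruent[OF that i0] by (intro congruence_extends_to_isometry[OF \<open>finite C\<close>]) blast
  then obtain T where T_isometry: "\<And>i y z. i \<in> I \<Longrightarrow> dist (T i y) (T i z) = dist y z"
    and T_C: "\<And>i c. i \<in> I \<Longrightarrow> c \<in> C \<Longrightarrow> T i (r i c) = r i0 c"
    by metis
  define piece where "piece x = (SOME i. i \<in> I \<and> x \<in> P i)" for x
  define q where "q x = (if x \<in> C then r i0 x else T (piece x) (r (piece x) x))" for x
  have q: "q x = T i (r i x)" if "i \<in> I" "x \<in> P i" for i x
  proof (cases "x \<in> C")
    case True
    then show ?thesis using T_C that by (simp add: q_def)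
  next
    case False
    have "piece x = i" unfolding piece_def
      by (rule some_equality) (use that False piece_overlap in blast)+
    then show ?thesis using False by (simp add: q_def)
  qed
  have "dist (q x) (q y) = dist (r i x) (r i y)" if "i \<in> I" "x \<in> P i" "y \<in> P i" for i x y
    using that by (simp add: q T_isometry)
  then show ?thesis by blast
qed simp

lemma induced_edges_insert_Diff:
  "f \<notin> E \<Longrightarrow> induced_edges (insert f E) W - {f} = induced_edges E W"
  unfolding induced_edges_def by blast

lemma induced_edges_subset: "induced_edges E W \<subseteq> E"
  unfolding induced_edges_def by blast

lemma realization_mono: "realization E' l p \<Longrightarrow> E \<subseteq> E' \<Longrightarrow> realization E l p"
  unfolding realization_def by blast

lemma realizationD: "realization E l p \<Longrightarrow> {a, b} \<in> E \<Longrightarrow> (norm (p a - p b))\<^sup>2 = l {a, b}"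
  unfolding realization_def by blast

definition sq_edge_length :: "('a \<Rightarrow> 'v::real_normed_vector) \<Rightarrow> 'a set \<Rightarrow> real" where
  "sq_edge_length p e = (SOME d. \<exists>a b. e = {a, b} \<and> d = (norm (p a - p b))\<^sup>2)"

lemma sq_edge_length_doubleton [simp]: "sq_edge_length p {a, b} = (norm (p a - p b))\<^sup>2"
  unfolding sq_edge_length_def
  by (rule some_equality) (auto simp: doubleton_eq_iff norm_minus_commute)

lemma has_SIP_betweenI:
  assumes "\<And>l (p1 :: 'a \<Rightarrow> real ^ 'n::finite) (p3 :: 'a \<Rightarrow> real ^ 'n) t. \<forall>e\<in>E. 0 \<le> l e \<Longrightarrow>
      realization E l p1 \<Longrightarrow> realization E l p3 \<Longrightarrow>
      (norm (p1 u - p1 v))\<^sup>2 \<le> t \<Longrightarrow> t \<le> (norm (p3 u - p3 v))\<^sup>2 \<Longrightarrow>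
      \<exists>p :: 'a \<Rightarrow> real ^ 'n. realization E l p \<and> (norm (p u - p v))\<^sup>2 = t"
  shows "has_SIP TYPE('n) E u v"
  unfolding has_SIP_def is_interval_convex_1[symmetric] is_interval_1
proof (intro allI impI ballI)
  fix l t1 t3 t
  assume l: "\<forall>e\<in>E. 0 \<le> l e" and "t1 \<in> Omega TYPE('n) E l u v" "t3 \<in> Omega TYPE('n) E l u v"
    and t: "t1 \<le> t \<and> t \<le> t3"
  then obtain p1 p3 :: "'a \<Rightarrow> real ^ 'n" where p1: "realization E l p1" "t1 = (norm (p1 u - p1 v))\<^sup>2"
    and p3: "realization E l p3" "t3 = (norm (p3 u - p3 v))\<^sup>2"
    unfolding Omega_def by blast
  then obtain p :: "'a \<Rightarrow> real ^ 'n" where "realization E l p" "(norm (p u - p v))\<^sup>2 = t"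
    using assms[OF l p1(1) p3(1)] t by auto
  then show "t \<in> Omega TYPE('n) E l u v" unfolding Omega_def by blast
qed

lemma has_SIP_betweenD:
  fixes p1 p3 :: "'a \<Rightarrow> real ^ 'n::finite"
  assumes "has_SIP TYPE('n) E u v" "\<forall>e\<in>E. 0 \<le> l e"
    and "realization E l p1" "realization E l p3"
    and "(norm (p1 u - p1 v))\<^sup>2 \<le> t" "t \<le> (norm (p3 u - p3 v))\<^sup>2"
  obtains p :: "'a \<Rightarrow> real ^ 'n" where "realization E l p" "(norm (p u - p v))\<^sup>2 = t"
proof -
  have "is_interval (Omega TYPE('n) E l u v)"
    using assms(1,2) by (simp add: has_SIP_def is_interval_convex_1)
  moreover have "(norm (p1 u - p1 v))\<^sup>2 \<in> Omega TYPE('n) E l u v"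
    "(norm (p3 u - p3 v))\<^sup>2 \<in> Omega TYPE('n) E l u v"
    using assms(3,4) unfolding Omega_def by blast+
  ultimately have "t \<in> Omega TYPE('n) E l u v" using assms(5,6) unfolding is_interval_1 by blast
  then show ?thesis using that unfolding Omega_def by blast
qed

text \<open>All vertices outside the piece go to a single point; the edges leaving the piece then end
  in C, where the two chosen points have matching distances, so the lengths read off from the first
  extension fit the second as well.\<close>
lemma realizations_extend_from_component:
  fixes p1 p3 :: "'a \<Rightarrow> real ^ 'n::finite"
  assumes simple: "simple_graph V E" and EH: "E \<subseteq> H"
    and K: "K \<in> components_minus V H C"
    and li: "\<forall>e\<in>induced_edges E (K \<union> C). 0 \<le> li e"
    and p1: "realization (induced_edges E (K \<union> C)) li p1"
    and p3: "realization (induced_edges E (K \<union> C)) li p3"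
    and X: "\<And>c. c \<in> C \<Longrightarrow> dist X1 (p1 c) = dist X3 (p3 c)"
  obtains l q1 q3 where "\<forall>e\<in>E. 0 \<le> l e" "\<And>e. e \<in> induced_edges E (K \<union> C) \<Longrightarrow> l e = li e"
    "realization E l q1" "realization E l q3"
    "\<And>x. x \<in> K \<union> C \<Longrightarrow> q1 x = p1 x" "\<And>x. x \<in> K \<union> C \<Longrightarrow> q3 x = p3 x"
proof -
  let ?EK = "induced_edges E (K \<union> C)"
  define q1 where "q1 x = (if x \<in> K \<union> C then p1 x else X1)" for x
  define q3 where "q3 x = (if x \<in> K \<union> C then p3 x else X3)" for x
  define l where "l e = (if e \<in> ?EK then li e else sq_edge_length q1 e)" for e
  have outside: "dist (q1 a) (q1 b) = dist (q3 a) (q3 b)"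
    if ab: "{a, b} \<in> E" "\<not> {a, b} \<subseteq> K \<union> C" for a b
  proof -
    have "a \<in> V" "b \<in> V" using simple ab(1) by (auto simp: simple_graph_def doubleton_eq_iff)
    then have "a \<notin> K" "b \<notin> K"
      using ab EH components_minus_edge_closed[OF K, of a b] components_minus_edge_closed[OF K, of b a]
      by (auto simp: insert_commute)
    then show ?thesis using ab(2) X by (auto simp: q1_def q3_def dist_commute)
  qed
  have "(norm (q1 a - q1 b))\<^sup>2 = l {a, b} \<and> (norm (q3 a - q3 b))\<^sup>2 = l {a, b}"
    if e: "{a, b} \<in> E" for a b
  proof (cases "{a, b} \<subseteq> K \<union> C")
    case True
    then have "{a, b} \<in> ?EK" using e by (simp add: induced_edges_def)
    then show ?thesis
      using True realizationD[OF p1] realizationD[OF p3] by (simp add: q1_def q3_def l_def)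
  next
    case False
    then have "{a, b} \<notin> ?EK" by (simp add: induced_edges_def)
    then show ?thesis using outside[OF e False] by (simp add: l_def dist_norm)
  qed
  then have "realization E l q1" "realization E l q3" by (simp_all add: realization_def)
  moreover have "\<forall>e\<in>E. 0 \<le> l e"
    using li simple by (auto simp: l_def simple_graph_def)
  ultimately show ?thesis by (intro that[of l q1 q3]) (simp_all add: l_def q1_def q3_def)
qed

lemma has_SIP_induced_component:
  assumes simple: "simple_graph V E"
    and cl: "clique (insert {u, v} E) C"
    and K: "K \<in> components_minus V (insert {u, v} E) C"
    and uv: "u \<in> K \<union> C" "v \<in> K \<union> C"
    and sip: "has_SIP TYPE('n::finite) E u v"
  shows "has_SIP TYPE('n) (induced_edges E (K \<union> C)) u v"
proof (rule has_SIP_betweenI)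
  let ?EK = "induced_edges E (K \<union> C)"
  fix li and p1 p3 :: "'a \<Rightarrow> real ^ 'n" and t
  assume li: "\<forall>e\<in>?EK. 0 \<le> li e" and p1: "realization ?EK li p1" and p3: "realization ?EK li p3"
    and t: "(norm (p1 u - p1 v))\<^sup>2 \<le> t" "t \<le> (norm (p3 u - p3 v))\<^sup>2"
  have C_congruent: "dist (p1 c) (p1 c') = dist (p3 c) (p3 c')"
    if "c \<in> C" "c' \<in> C" "{c, c'} \<noteq> {u, v}" for c c'
  proof (cases "c = c'")
    case False
    with that cl have "{c, c'} \<in> ?EK" by (auto simp: clique_def induced_edges_def)
    then have "(dist (p1 c) (p1 c'))\<^sup>2 = (dist (p3 c) (p3 c'))\<^sup>2"
      using realizationD[OF p1] realizationD[OF p3] by (simp add: dist_norm)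
    then show ?thesis by simp
  qed simp
  obtain X1 X3 where "\<And>c. c \<in> C \<Longrightarrow> dist X1 (p1 c) = dist X3 (p3 c)"
    using exists_points_matching_distances_to_set[of C u v p1 p3, OF C_congruent] by blast
  then obtain l q1 q3 where l: "\<forall>e\<in>E. 0 \<le> l e" "\<And>e. e \<in> ?EK \<Longrightarrow> l e = li e"
    and q: "realization E l q1" "realization E l q3"
    and q1: "\<And>x. x \<in> K \<union> C \<Longrightarrow> q1 x = p1 x" and q3: "\<And>x. x \<in> K \<union> C \<Longrightarrow> q3 x = p3 x"
    using realizations_extend_from_component[OF simple _ K li p1 p3] by blast
  have "(norm (q1 u - q1 v))\<^sup>2 \<le> t" "t \<le> (norm (q3 u - q3 v))\<^sup>2"
    using uv t q1 q3 by simp_all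
  then obtain r :: "'a \<Rightarrow> real ^ 'n" where r: "realization E l r" "(norm (r u - r v))\<^sup>2 = t"
    using has_SIP_betweenD[OF sip l(1) q] by blast
  have "realization ?EK li r"
    using realization_mono[OF r(1) induced_edges_subset] l(2) by (simp add: realization_def)
  with r(2) show "\<exists>p :: 'a \<Rightarrow> real ^ 'n. realization ?EK li p \<and> (norm (p u - p v))\<^sup>2 = t"
    by blast
qed

lemma realization_glue_components:
  fixes r :: "'a set \<Rightarrow> 'a \<Rightarrow> real ^ 'n::finite"
  assumes simple: "simple_graph V E" and EH: "E \<subseteq> H" and CV: "C \<subseteq> V"
    and ne: "components_minus V H C \<noteq> {}"
    and r: "\<And>K. K \<in> components_minus V H C \<Longrightarrow> realization (induced_edges E (K \<union> C)) l (r K)"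
    and congruent: "\<And>K K' c c'. K \<in> components_minus V H C \<Longrightarrow> K' \<in> components_minus V H C \<Longrightarrow>
      c \<in> C \<Longrightarrow> c' \<in> C \<Longrightarrow> dist (r K c) (r K c') = dist (r K' c) (r K' c')"
  obtains q :: "'a \<Rightarrow> real ^ 'n" where "realization E l q"
    "\<And>K x y. K \<in> components_minus V H C \<Longrightarrow> x \<in> K \<union> C \<Longrightarrow> y \<in> K \<union> C \<Longrightarrow>
      dist (q x) (q y) = dist (r K x) (r K y)"
proof -
  let ?Cs = "components_minus V H C"
  have "finite C" using CV simple finite_subset by (auto simp: simple_graph_def)
  have "\<exists>q :: 'a \<Rightarrow> real ^ 'n. \<forall>K\<in>?Cs. \<forall>x\<in>K \<union> C. \<forall>y\<in>K \<union> C. dist (q x) (q y) = dist (r K x) (r K y)"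
    by (rule glue_along_congruent_part[of C ?Cs "\<lambda>K. K \<union> C" r,
          OF \<open>finite C\<close> _ components_minus_pieces_overlap congruent]) auto
  then obtain q :: "'a \<Rightarrow> real ^ 'n" where
    q: "\<And>K x y. K \<in> ?Cs \<Longrightarrow> x \<in> K \<union> C \<Longrightarrow> y \<in> K \<union> C \<Longrightarrow> dist (q x) (q y) = dist (r K x) (r K y)"
    by blast
  have "realization E l q" unfolding realization_def
  proof (intro allI impI)
    fix a b assume e: "{a, b} \<in> E"
    then have "a \<in> V" "b \<in> V" using simple by (auto simp: simple_graph_def doubleton_eq_iff)
    then obtain K where K: "K \<in> ?Cs" "a \<in> K \<union> C" "b \<in> K \<union> C"
      using components_minus_edge_in_piece[OF ne, of a b] e EH by blast
    then have "{a, b} \<in> induced_edges E (K \<union> C)" using e by (simp add: induced_edges_def)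
    then show "(norm (q a - q b))\<^sup>2 = l {a, b}"
      using realizationD[OF r[OF K(1)]] q[OF K] by (simp add: dist_norm)
  qed
  then show ?thesis using q by (rule that)
qed

lemma has_SIP_of_components:
  assumes simple: "simple_graph V E" and uvV: "u \<in> V" "v \<in> V"
    and cl: "clique (insert {u, v} E) C" and CV: "C \<subseteq> V"
    and ne: "components_minus V (insert {u, v} E) C \<noteq> {}"
    and sips: "\<And>K. K \<in> components_minus V (insert {u, v} E) C \<Longrightarrow> u \<in> K \<union> C \<Longrightarrow> v \<in> K \<union> C \<Longrightarrow>
      has_SIP TYPE('n::finite) (induced_edges E (K \<union> C)) u v"
  shows "has_SIP TYPE('n) E u v"
proof (rule has_SIP_betweenI)
  let ?Cs = "components_minus V (insert {u, v} E) C"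
  fix l and p1 p3 :: "'a \<Rightarrow> real ^ 'n" and t
  assume l: "\<forall>e\<in>E. 0 \<le> l e" and p1: "realization E l p1" and p3: "realization E l p3"
    and t: "(norm (p1 u - p1 v))\<^sup>2 \<le> t" "t \<le> (norm (p3 u - p3 v))\<^sup>2"
  have "\<exists>r :: 'a \<Rightarrow> real ^ 'n. realization (induced_edges E (K \<union> C)) l r \<and>
      (u \<in> K \<union> C \<and> v \<in> K \<union> C \<longrightarrow> (norm (r u - r v))\<^sup>2 = t)" if K: "K \<in> ?Cs" for K
  proof (cases "u \<in> K \<union> C \<and> v \<in> K \<union> C")
    case True
    have "\<forall>e\<in>induced_edges E (K \<union> C). 0 \<le> l e" using l by (simp add: induced_edges_def)
    then obtain r :: "'a \<Rightarrow> real ^ 'n" where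
      "realization (induced_edges E (K \<union> C)) l r" "(norm (r u - r v))\<^sup>2 = t"
      using has_SIP_betweenD[OF sips[OF K] _ realization_mono[OF p1] realization_mono[OF p3] t]
        True induced_edges_subset by blast
    then show ?thesis by blast
  next
    case False
    then show ?thesis using realization_mono[OF p1 induced_edges_subset] by blast
  qed
  then obtain r :: "'a set \<Rightarrow> 'a \<Rightarrow> real ^ 'n" where
    r: "\<And>K. K \<in> ?Cs \<Longrightarrow> realization (induced_edges E (K \<union> C)) l (r K)"
    and r_uv: "\<And>K. K \<in> ?Cs \<Longrightarrow> u \<in> K \<union> C \<Longrightarrow> v \<in> K \<union> C \<Longrightarrow> (norm (r K u - r K v))\<^sup>2 = t"
    by metis
  have C_congruent: "dist (r K c) (r K c') = dist (r K' c) (r K' c')"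
    if K: "K \<in> ?Cs" "K' \<in> ?Cs" and c: "c \<in> C" "c' \<in> C" for K K' c c'
  proof (cases "c = c'")
    case False
    then have cc': "{c, c'} \<in> insert {u, v} E" using cl c by (auto simp: clique_def)
    have "(norm (r K c - r K c'))\<^sup>2 = (norm (r K' c - r K' c'))\<^sup>2"
    proof (cases "{c, c'} = {u, v}")
      case True
      then have "u \<in> C" "v \<in> C" using c by (auto simp: doubleton_eq_iff)
      then show ?thesis using True r_uv[OF K(1)] r_uv[OF K(2)]
        by (auto simp: doubleton_eq_iff norm_minus_commute)
    next
      case False
      then have "{c, c'} \<in> induced_edges E (K \<union> C)" "{c, c'} \<in> induced_edges E (K' \<union> C)"
        using cc' c by (auto simp: induced_edges_def)
      then show ?thesis using realizationD[OF r[OF K(1)]] realizationD[OF r[OF K(2)]] by simp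
    qed
    then show ?thesis by (simp add: dist_norm)
  qed simp
  obtain q :: "'a \<Rightarrow> real ^ 'n" where q: "realization E l q"
    "\<And>K x y. K \<in> ?Cs \<Longrightarrow> x \<in> K \<union> C \<Longrightarrow> y \<in> K \<union> C \<Longrightarrow> dist (q x) (q y) = dist (r K x) (r K y)"
    using realization_glue_components[OF simple _ CV ne r C_congruent] by blast
  obtain K0 where "K0 \<in> ?Cs" "u \<in> K0 \<union> C" "v \<in> K0 \<union> C"
    using components_minus_edge_in_piece[OF ne _ uvV] by blast
  then have "(norm (q u - q v))\<^sup>2 = t" using q(2) r_uv by (simp add: dist_norm)
  with q(1) show "\<exists>p :: 'a \<Rightarrow> real ^ 'n. realization E l p \<and> (norm (p u - p v))\<^sup>2 = t"
    by blast
qed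

theorem mainTheorem8:
  fixes V :: "'a set" and E :: "'a set set" and u v :: 'a and C :: "'a set"
  assumes "simple_graph V E"
    and "u \<in> V" and "v \<in> V" and "u \<noteq> v" and "{u, v} \<notin> E"
    and "clique_separator V (insert {u, v} E) C"
  shows "has_SIP TYPE('n::finite) E u v \<longleftrightarrow>
    (\<forall>K \<in> components_minus V (insert {u, v} E) C.
       u \<in> K \<union> C \<and> v \<in> K \<union> C \<longrightarrow>
       has_SIP TYPE('n) (induced_edges (insert {u, v} E) (K \<union> C) - {{u, v}}) u v)"
proof -
  from assms(6) have cl: "clique (insert {u, v} E) C" and CV: "C \<subseteq> V"
    and ne: "components_minus V (insert {u, v} E) C \<noteq> {}"
    unfolding clique_separator_def by auto
  show ?thesis
    unfolding induced_edges_insert_Diff[OF assms(5)]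
    using has_SIP_induced_component[OF assms(1) cl] has_SIP_of_components[OF assms(1,2,3) cl CV ne]
    by blast
qed

end
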